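(* Let $p \in (0,\tfrac12)$ and $c\in(0,1)$ be constants. Every (possibly randomized, possibly adaptive) algorithm that solves FT-Min$(k)$ on $n$ elements with high probability, for $1 \le k \le c\cdot n$, performs an expected number of comparisons of $\Omega(\frac{n}{k}\log n)$ (on some input instance), where the hidden constant depends only on $p$ and $c$.
   Context: FT-Min$(k)$ (fault-tolerant approximate minimum selection): the input is a set $S$ of $n$ distinct elements of a totally ordered set; the algorithm can access the order only through pairwise comparisons. A comparison of distinct $x,y$ reports "$x<y$" or "$x>y$", and reports the wrong relation with probability (at most) $p$, independently of all other comparisons (repeated comparisons of the same pair are also independent). The goal is to output one of the $k$ smallest elements of $S$. An algorithm solves it with high probability if on every input it outputs one of the $k$ smallest elements with probability at least $1-\frac1n$. Algorithms may be randomized and adaptive. *)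

theory Defs
  imports "HOL-Probability.Probability"
begin

text \<open>Model of a randomized adaptive noisy-comparison algorithm on the elements
  0,...,n-1.  The algorithm is a (countable-state) probabilistic automaton:
  states are natural numbers, the initial state is drawn from a pmf, and in each
  state the algorithm either outputs an element or compares two elements and then
  moves (possibly randomly, depending on the reported answer) to a new state.
  Internal randomness between comparisons is folded into these transitions.\<close>

datatype act = is_Cmp: Cmp nat nat "bool \<Rightarrow> nat pmf" | Out nat

text \<open>The input: a rk function which is a bijection of {0..<n}; element x has
  rk (position in the sorted order) rk x.  The true answer to the query
  "i < j ?" (ill-formed queries have answer False, i.e. carry no information).\<close>

definition true_answer :: "nat \<Rightarrow> (nat \<Rightarrow> nat) \<Rightarrow> nat \<Rightarrow> nat \<Rightarrow> bool" where
  "true_answer n rk i j = (i < n \<and> j < n \<and> i \<noteq> j \<and> rk i < rk j)"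

definition step_pmf ::
  "real \<Rightarrow> nat \<Rightarrow> (nat \<Rightarrow> nat) \<Rightarrow> (nat \<Rightarrow> act) \<Rightarrow> nat \<Rightarrow> nat pmf" where
  "step_pmf p n rk alg s =
     (case alg s of
        Cmp i j f \<Rightarrow> bind_pmf (bernoulli_pmf p) (\<lambda>err. f (err \<noteq> true_answer n rk i j))
      | Out x \<Rightarrow> return_pmf s)"

fun state_dist ::
  "real \<Rightarrow> nat \<Rightarrow> (nat \<Rightarrow> nat) \<Rightarrow> nat pmf \<Rightarrow> (nat \<Rightarrow> act) \<Rightarrow> nat \<Rightarrow> nat pmf" where
  "state_dist p n rk s0 alg 0 = s0"
| "state_dist p n rk s0 alg (Suc t) =
     bind_pmf (state_dist p n rk s0 alg t) (step_pmf p n rk alg)"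

text \<open>Expected number of comparisons: E[T] = sum over t of Pr[T > t]
  (infinite if the algorithm does not terminate with positive probability).\<close>

definition expected_comparisons ::
  "real \<Rightarrow> nat \<Rightarrow> (nat \<Rightarrow> nat) \<Rightarrow> nat pmf \<Rightarrow> (nat \<Rightarrow> act) \<Rightarrow> ennreal" where
  "expected_comparisons p n rk s0 alg =
     (\<Sum>t. ennreal (measure_pmf.prob (state_dist p n rk s0 alg t) {s. is_Cmp (alg s)}))"

definition success_prob ::
  "real \<Rightarrow> nat \<Rightarrow> nat \<Rightarrow> (nat \<Rightarrow> nat) \<Rightarrow> nat pmf \<Rightarrow> (nat \<Rightarrow> act) \<Rightarrow> real" where
  "success_prob p n k rk s0 alg =
     (SUP t. measure_pmf.prob (state_dist p n rk s0 alg t)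
               {s. \<exists>x. alg s = Out x \<and> x < n \<and> rk x < k})"

definition solves_ft_min_whp ::
  "real \<Rightarrow> nat \<Rightarrow> nat \<Rightarrow> nat pmf \<Rightarrow> (nat \<Rightarrow> act) \<Rightarrow> bool" where
  "solves_ft_min_whp p n k s0 alg =
     (\<forall>rk. bij_betw rk {..<n} {..<n} \<longrightarrow> success_prob p n k rk s0 alg \<ge> 1 - 1 / real n)"

end

theory Submission
  imports Defs
begin

(* The hard input is the sorted one, rk = id.  If the input is changed to another ranking rk2,
   only the answers to queries that distinguish id from rk2 change in distribution, so on a run
   with c distinguishing queries the likelihood ratio is at least (p/(1-p))^c.  Hence, if some set
   of outputs has probability q under id but is wrong under rk2, the algorithm must make about
   q log n / log((1-p)/p) distinguishing queries in expectation, or it would fail on rk2 with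
   probability more than 1/n.
   For k <= n/4, cut the ranks above k into about n/k blocks of size k: moving one block to the
   bottom makes every output of rank < k wrong, and the least touched block is involved in only
   an O(k/n) fraction of all queries.  For larger k, cut the k smallest elements into blocks of
   size n - k and move the block that is output most often to the top. *)

lemma scaled_prob_le:
  fixes M N :: "'a pmf"
  assumes "0 \<le> r" and "\<And>x. x \<in> A \<Longrightarrow> r * pmf M x \<le> pmf N x"
  shows "r * measure_pmf.prob M A \<le> measure_pmf.prob N A"
proof -
  have "ennreal (r * measure_pmf.prob M A) = (\<integral>\<^sup>+x. ennreal (r * pmf M x) \<partial>count_space A)"
    using assms(1) by (simp add: ennreal_mult nn_integral_cmult nn_integral_pmf
        measure_pmf.emeasure_eq_measure)
  also have "\<dots> \<le> (\<integral>\<^sup>+x. ennreal (pmf N x) \<partial>count_space A)"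
    using assms(2) by (intro nn_integral_mono ennreal_leI) auto
  also have "\<dots> = ennreal (measure_pmf.prob N A)"
    by (simp add: nn_integral_pmf measure_pmf.emeasure_eq_measure)
  finally show ?thesis by simp
qed

lemma scaled_pmf_bind_le:
  assumes "0 \<le> r" and "\<And>x. r * (pmf M x * pmf (f x) y) \<le> pmf N x * pmf (g x) y"
  shows "r * pmf (bind_pmf M f) y \<le> pmf (bind_pmf N g) y"
proof -
  have "ennreal (r * pmf (bind_pmf M f) y) = (\<integral>\<^sup>+x. ennreal (r * (pmf M x * pmf (f x) y)) \<partial>count_space UNIV)"
    using assms(1) by (simp add: ennreal_pmf_bind nn_integral_measure_pmf ennreal_mult
        nn_integral_cmult mult_ac)
  also have "\<dots> \<le> (\<integral>\<^sup>+x. ennreal (pmf N x * pmf (g x) y) \<partial>count_space UNIV)"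
    using assms(2) by (intro nn_integral_mono ennreal_leI) auto
  also have "\<dots> = ennreal (pmf (bind_pmf N g) y)"
    by (simp add: ennreal_pmf_bind nn_integral_measure_pmf ennreal_mult)
  finally show ?thesis by simp
qed

definition distinguishes :: "nat \<Rightarrow> (nat \<Rightarrow> nat) \<Rightarrow> (nat \<Rightarrow> nat) \<Rightarrow> (nat \<Rightarrow> act) \<Rightarrow> nat \<Rightarrow> bool"
  where "distinguishes n rk1 rk2 alg s =
    (case alg s of Cmp i j f \<Rightarrow> true_answer n rk1 i j \<noteq> true_answer n rk2 i j | Out x \<Rightarrow> False)"

lemma distinguishes_imp_is_Cmp: "distinguishes n rk1 rk2 alg s \<Longrightarrow> is_Cmp (alg s)"
  by (cases "alg s") (auto simp: distinguishes_def)

fun counted_state_dist ::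
  "real \<Rightarrow> nat \<Rightarrow> (nat \<Rightarrow> nat) \<Rightarrow> nat pmf \<Rightarrow> (nat \<Rightarrow> act) \<Rightarrow> (nat \<Rightarrow> bool) \<Rightarrow> nat \<Rightarrow> (nat \<times> nat) pmf"
  where
    "counted_state_dist p n rk s0 alg D 0 = map_pmf (\<lambda>s. (s, 0)) s0"
  | "counted_state_dist p n rk s0 alg D (Suc t) =
       bind_pmf (counted_state_dist p n rk s0 alg D t)
         (\<lambda>(s, c). map_pmf (\<lambda>s'. (s', if D s then Suc c else c)) (step_pmf p n rk alg s))"

lemma map_fst_counted_state_dist:
  "map_pmf fst (counted_state_dist p n rk s0 alg D t) = state_dist p n rk s0 alg t"
proof (induction t)
  case (Suc t)
  have "map_pmf fst (counted_state_dist p n rk s0 alg D (Suc t))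
      = bind_pmf (counted_state_dist p n rk s0 alg D t) (\<lambda>x. step_pmf p n rk alg (fst x))"
    by (simp add: map_bind_pmf pmf.map_comp o_def split_beta)
  also have "\<dots> = bind_pmf (map_pmf fst (counted_state_dist p n rk s0 alg D t)) (step_pmf p n rk alg)"
    by (simp add: bind_map_pmf)
  finally show ?case using Suc by simp
qed (simp add: pmf.map_comp o_def)

lemma nn_integral_count_counted_state_dist:
  "(\<integral>\<^sup>+x. of_nat (snd x) \<partial>counted_state_dist p n rk s0 alg D t)
     = (\<Sum>t'<t. ennreal (measure_pmf.prob (state_dist p n rk s0 alg t') {s. D s}))"
proof (induction t)
  case (Suc t)
  let ?J = "counted_state_dist p n rk s0 alg D t"
  have "(\<integral>\<^sup>+x. of_nat (snd x) \<partial>counted_state_dist p n rk s0 alg D (Suc t))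
      = (\<integral>\<^sup>+x. of_nat (snd x) + indicator {x. D (fst x)} x \<partial>?J)"
    by (auto simp: measure_pmf.emeasure_space_1 split_beta intro!: nn_integral_cong
        split: split_indicator)
  also have "\<dots> = (\<integral>\<^sup>+x. of_nat (snd x) \<partial>?J) + emeasure (map_pmf fst ?J) {s. D s}"
    by (subst nn_integral_add) (auto simp: vimage_def)
  finally show ?case
    using Suc by (simp add: map_fst_counted_state_dist measure_pmf.emeasure_eq_measure)
qed simp

lemma prob_count_exceeds_le:
  "measure_pmf.prob (counted_state_dist p n rk s0 alg D t) {x. m < snd x}
     \<le> (\<Sum>t'<t. measure_pmf.prob (state_dist p n rk s0 alg t') {s. D s}) / real (Suc m)"
proof -
  let ?J = "counted_state_dist p n rk s0 alg D t"
  have "emeasure ?J {x. m < snd x} * of_nat (Suc m) = (\<integral>\<^sup>+x. of_nat (Suc m) * indicator {x. m < snd x} x \<partial>?J)"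
    by (simp add: nn_integral_cmult_indicator mult.commute)
  also have "\<dots> \<le> (\<integral>\<^sup>+x. of_nat (snd x) \<partial>?J)"
    by (intro nn_integral_mono) (auto split: split_indicator simp del: of_nat_Suc intro!: of_nat_mono)
  also have "\<dots> = ennreal (\<Sum>t'<t. measure_pmf.prob (state_dist p n rk s0 alg t') {s. D s})"
    by (simp add: nn_integral_count_counted_state_dist sum_ennreal)
  finally have "measure_pmf.prob ?J {x. m < snd x} * real (Suc m)
      \<le> (\<Sum>t'<t. measure_pmf.prob (state_dist p n rk s0 alg t') {s. D s})"
    by (simp del: of_nat_Suc add: measure_pmf.emeasure_eq_measure ennreal_of_nat_eq_real_of_nat
        sum_nonneg flip: ennreal_mult)
  then show ?thesis by (simp add: field_simps)
qed

lemma swapped_mixture_ratio_le: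
  fixes p X Y :: real
  assumes "0 < p" "p < 1/2" "0 \<le> X" "0 \<le> Y"
  shows "p / (1 - p) * (X * p + Y * (1 - p)) \<le> Y * p + X * (1 - p)"
proof -
  have "p * p \<le> (1 - p) * (1 - p)" using assms by (intro mult_mono) auto
  then have "X * (p * p) \<le> X * ((1 - p) * (1 - p))" using assms by (intro mult_left_mono)
  then show ?thesis using assms by (simp add: field_simps)
qed

lemma step_pmf_likelihood_ratio:
  assumes p: "0 < p" "p < 1/2"
  shows "(p / (1 - p)) ^ (if distinguishes n rk1 rk2 alg s then 1 else 0) * pmf (step_pmf p n rk1 alg s) s'
           \<le> pmf (step_pmf p n rk2 alg s) s'"
proof (cases "alg s")
  case (Cmp i j f)
  have step: "pmf (step_pmf p n rk alg s) s'
      = pmf (f (\<not> true_answer n rk i j)) s' * p + pmf (f (true_answer n rk i j)) s' * (1 - p)" for rk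
    using p by (simp add: step_pmf_def Cmp pmf_bind)
  show ?thesis
  proof (cases "true_answer n rk1 i j = true_answer n rk2 i j")
    case False
    then have "true_answer n rk2 i j = (\<not> true_answer n rk1 i j)" by auto
    then show ?thesis
      using False swapped_mixture_ratio_le[OF p pmf_nonneg pmf_nonneg]
      by (simp add: step distinguishes_def Cmp)
  qed (simp add: step distinguishes_def Cmp)
qed (simp add: distinguishes_def step_pmf_def)

lemma pmf_map_pmf_Pair:
  "pmf (map_pmf (\<lambda>s. (s, c')) M) (s, c) = (if c = c' then pmf M s else 0)"
proof (cases "c = c'")
  case True
  then show ?thesis using pmf_map_inj'[of "\<lambda>s. (s, c')" M s] by (simp add: inj_def)
qed (auto simp: pmf_eq_0_set_pmf)

lemma counted_state_dist_likelihood_ratio: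
  assumes p: "0 < p" "p < 1/2"
  shows "(p / (1 - p)) ^ c * pmf (counted_state_dist p n rk1 s0 alg (distinguishes n rk1 rk2 alg) t) (s, c)
           \<le> pmf (counted_state_dist p n rk2 s0 alg (distinguishes n rk1 rk2 alg) t) (s, c)"
proof (induction t arbitrary: s c)
  case 0
  have "(p / (1 - p)) ^ c \<le> 1" using p by (intro power_le_one) auto
  then show ?case
    unfolding counted_state_dist.simps by (rule mult_left_le_one_le[rotated 2]) (use p in auto)
next
  case (Suc t)
  let ?D = "distinguishes n rk1 rk2 alg"
  let ?r = "p / (1 - p)"
  show ?case
    unfolding counted_state_dist.simps
  proof (rule scaled_pmf_bind_le, goal_cases)
    case (2 x)
    obtain s1 c1 where x: "x = (s1, c1)" by force
    show ?case
    proof (cases "c = (if ?D s1 then Suc c1 else c1)")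
      case True
      have "?r ^ c * (pmf (counted_state_dist p n rk1 s0 alg ?D t) x * pmf (step_pmf p n rk1 alg s1) s)
          = (?r ^ c1 * pmf (counted_state_dist p n rk1 s0 alg ?D t) (s1, c1))
            * (?r ^ (if ?D s1 then 1 else 0) * pmf (step_pmf p n rk1 alg s1) s)"
        using True by (simp add: x)
      also have "\<dots> \<le> pmf (counted_state_dist p n rk2 s0 alg ?D t) x * pmf (step_pmf p n rk2 alg s1) s"
        using Suc step_pmf_likelihood_ratio[OF p, of n rk1 rk2 alg s1 s] p
        by (intro mult_mono) (auto simp: x)
      finally show ?thesis using True by (simp add: x pmf_map_pmf_Pair)
    qed (simp add: x pmf_map_pmf_Pair)
  qed (use p in simp)
qed

lemma change_of_measure:
  assumes p: "0 < p" "p < 1/2"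
  shows "(p / (1 - p)) ^ m * (measure_pmf.prob (state_dist p n rk1 s0 alg t) A
            - (\<Sum>t'<t. measure_pmf.prob (state_dist p n rk1 s0 alg t') {s. distinguishes n rk1 rk2 alg s})
              / real (Suc m))
         \<le> measure_pmf.prob (state_dist p n rk2 s0 alg t) A"
proof -
  define D where "D = distinguishes n rk1 rk2 alg"
  define J1 where "J1 = counted_state_dist p n rk1 s0 alg D t"
  define J2 where "J2 = counted_state_dist p n rk2 s0 alg D t"
  define Few where "Few = {x. fst x \<in> A \<and> snd x \<le> m}"
  let ?r = "p / (1 - p)"
  have r: "0 \<le> ?r" "?r \<le> 1" using p by (auto simp: field_simps)
  (* Runs in Few have likelihood ratio at least r^m; Markov's inequality bounds the others. *)
  have "measure_pmf.prob (state_dist p n rk1 s0 alg t) A = measure_pmf.prob J1 (fst -` A)"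
    unfolding J1_def by (metis map_fst_counted_state_dist measure_map_pmf)
  also have "\<dots> \<le> measure_pmf.prob J1 (Few \<union> {x. m < snd x})"
    by (rule measure_pmf.finite_measure_mono) (auto simp: Few_def)
  also have "\<dots> \<le> measure_pmf.prob J1 Few + measure_pmf.prob J1 {x. m < snd x}"
    by (rule measure_Un_le) auto
  also have "measure_pmf.prob J1 {x. m < snd x}
      \<le> (\<Sum>t'<t. measure_pmf.prob (state_dist p n rk1 s0 alg t') {s. D s}) / real (Suc m)"
    unfolding J1_def by (rule prob_count_exceeds_le)
  finally have "?r ^ m * (measure_pmf.prob (state_dist p n rk1 s0 alg t) A
      - (\<Sum>t'<t. measure_pmf.prob (state_dist p n rk1 s0 alg t') {s. D s}) / real (Suc m))
      \<le> ?r ^ m * measure_pmf.prob J1 Few"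
    using r by (intro mult_left_mono) auto
  also have "\<dots> \<le> measure_pmf.prob J2 Few"
  proof (rule scaled_prob_le)
    fix x assume "x \<in> Few"
    then obtain s c where x: "x = (s, c)" and "c \<le> m" by (cases x) (auto simp: Few_def)
    then have "?r ^ m * pmf J1 x \<le> ?r ^ c * pmf J1 x"
      using r by (intro mult_right_mono power_decreasing) auto
    also have "\<dots> \<le> pmf J2 x"
      unfolding x J1_def J2_def D_def by (rule counted_state_dist_likelihood_ratio[OF p])
    finally show "?r ^ m * pmf J1 x \<le> pmf J2 x" .
  qed (use r in simp)
  also have "\<dots> \<le> measure_pmf.prob J2 (fst -` A)"
    by (rule measure_pmf.finite_measure_mono) (auto simp: Few_def)
  also have "\<dots> = measure_pmf.prob (state_dist p n rk2 s0 alg t) A"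
    unfolding J2_def by (metis map_fst_counted_state_dist measure_map_pmf)
  finally show ?thesis by (simp add: D_def)
qed

definition successful_outputs :: "nat \<Rightarrow> nat \<Rightarrow> (nat \<Rightarrow> nat) \<Rightarrow> (nat \<Rightarrow> act) \<Rightarrow> nat set"
  where "successful_outputs n k rk alg = {s. \<exists>x. alg s = Out x \<and> x < n \<and> rk x < k}"

lemma prob_le_prob_bind_step_pmf:
  assumes "\<And>s. s \<in> A \<Longrightarrow> \<not> is_Cmp (alg s)"
  shows "measure_pmf.prob M A \<le> measure_pmf.prob (bind_pmf M (step_pmf p n rk alg)) A"
proof -
  have "emeasure M A = (\<integral>\<^sup>+s. indicator A s \<partial>M)" by simp
  also have "\<dots> \<le> (\<integral>\<^sup>+s. emeasure (step_pmf p n rk alg s) A \<partial>M)"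
  proof (intro nn_integral_mono)
    fix s
    show "indicator A s \<le> emeasure (step_pmf p n rk alg s) A"
    proof (cases "s \<in> A")
      case True
      then obtain x where "alg s = Out x" using assms[OF True] by (cases "alg s") auto
      then show ?thesis using True by (simp add: step_pmf_def)
    qed simp
  qed
  also have "\<dots> = emeasure (bind_pmf M (step_pmf p n rk alg)) A" by simp
  finally show ?thesis by (simp add: measure_pmf.emeasure_eq_measure)
qed

lemma prob_state_dist_mono:
  assumes "\<And>s. s \<in> A \<Longrightarrow> \<not> is_Cmp (alg s)" and "t \<le> t'"
  shows "measure_pmf.prob (state_dist p n rk s0 alg t) A \<le> measure_pmf.prob (state_dist p n rk s0 alg t') A"
  using assms(2)
proof (induction t' rule: dec_induct)
  case (step t')
  then show ?case using prob_le_prob_bind_step_pmf[OF assms(1)] by (simp add: order_trans)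
qed simp

lemma success_prob_le:
  assumes "\<And>s. s \<in> A \<Longrightarrow> \<not> is_Cmp (alg s)" and "A \<inter> successful_outputs n k rk alg = {}"
  shows "success_prob p n k rk s0 alg \<le> 1 - measure_pmf.prob (state_dist p n rk s0 alg t) A"
  unfolding success_prob_def
proof (rule cSUP_least)
  fix t'
  let ?S = "successful_outputs n k rk alg"
  let ?P = "\<lambda>t B. measure_pmf.prob (state_dist p n rk s0 alg t) B"
  have S_out: "\<And>s. s \<in> ?S \<Longrightarrow> \<not> is_Cmp (alg s)" by (auto simp: successful_outputs_def)
  have "?P t' ?S + ?P t A \<le> ?P (max t t') ?S + ?P (max t t') A"
    using prob_state_dist_mono[OF S_out] prob_state_dist_mono[OF assms(1)] by (intro add_mono) auto
  also have "\<dots> = ?P (max t t') (?S \<union> A)"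
    using assms(2) by (intro measure_pmf.finite_measure_Union[symmetric]) auto
  also have "\<dots> \<le> 1" by (rule measure_pmf.prob_le_1)
  finally show "?P t' {s. \<exists>x. alg s = Out x \<and> x < n \<and> rk x < k} \<le> 1 - ?P t A"
    by (simp add: successful_outputs_def)
qed simp

lemma solves_ft_min_whp_imp_success_at_some_time:
  assumes "solves_ft_min_whp p n k s0 alg" and "bij_betw rk {..<n} {..<n}" and "q < 1 - 1 / real n"
  shows "\<exists>t. q \<le> measure_pmf.prob (state_dist p n rk s0 alg t) (successful_outputs n k rk alg)"
proof -
  have "q < success_prob p n k rk s0 alg"
    using assms by (auto simp: solves_ft_min_whp_def)
  then obtain t where "q < measure_pmf.prob (state_dist p n rk s0 alg t) (successful_outputs n k rk alg)"
    unfolding success_prob_def successful_outputs_def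
    by (subst (asm) less_cSUP_iff) (auto intro: bdd_aboveI[where M = 1])
  then show ?thesis by (auto intro: less_imp_le)
qed

lemma whp_forces_distinguishing_queries:
  assumes p: "0 < p" "p < 1/2" and "0 < n"
    and solves: "solves_ft_min_whp p n k s0 alg" and rk2: "bij_betw rk2 {..<n} {..<n}"
    and A_out: "\<And>s. s \<in> A \<Longrightarrow> \<not> is_Cmp (alg s)"
    and A_fails: "A \<inter> successful_outputs n k rk2 alg = {}"
    and q: "0 < q" "q \<le> measure_pmf.prob (state_dist p n rk1 s0 alg t) A"
    and e: "(\<Sum>t'<t. measure_pmf.prob (state_dist p n rk1 s0 alg t') {s. distinguishes n rk1 rk2 alg s}) \<le> e"
  shows "ln (real n * q / 2) \<le> (2 * e / q + 1) * ln ((1 - p) / p)"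
proof -
  let ?r = "p / (1 - p)"
  let ?E = "\<Sum>t'<t. measure_pmf.prob (state_dist p n rk1 s0 alg t') {s. distinguishes n rk1 rk2 alg s}"
  have r: "0 < ?r" using p by simp
  have "0 \<le> ?E" by (simp add: sum_nonneg)
  with e have "0 \<le> e" by linarith
  with q have "0 \<le> 2 * e / q" by simp
  (* m is large enough that runs with more than m distinguishing queries cost at most q/2 of A. *)
  define m where "m = nat \<lceil>2 * e / q\<rceil>"
  have m: "2 * e / q \<le> real m" "real m < 2 * e / q + 1"
    unfolding m_def using \<open>0 \<le> 2 * e / q\<close> by linarith+
  have "2 * ?E \<le> real (Suc m) * q"
    using m e q by (simp add: field_simps)
  then have "?E / real (Suc m) \<le> q / 2"
    by (simp add: field_simps)
  then have "?r ^ m * (q / 2) \<le> ?r ^ m * (measure_pmf.prob (state_dist p n rk1 s0 alg t) A - ?E / real (Suc m))"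
    using q r by (intro mult_left_mono) auto
  also have "\<dots> \<le> measure_pmf.prob (state_dist p n rk2 s0 alg t) A"
    by (rule change_of_measure[OF p])
  also have "\<dots> \<le> 1 - success_prob p n k rk2 s0 alg"
    using success_prob_le[of A alg n k rk2 p s0 t] A_out A_fails by simp
  also have "\<dots> \<le> 1 / real n"
    using solves rk2 unfolding solves_ft_min_whp_def by force
  finally have "ln (?r ^ m * (q / 2)) \<le> ln (1 / real n)"
    using r q \<open>0 < n\<close> by (subst ln_le_cancel_iff) auto
  then have "ln (real n * q / 2) \<le> real m * ln ((1 - p) / p)"
    using r q p \<open>0 < n\<close> by (simp add: ln_mult ln_realpow ln_div right_diff_distrib)
  also have "\<dots> \<le> (2 * e / q + 1) * ln ((1 - p) / p)"
    using m p by (intro mult_right_mono) (auto simp: field_simps)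
  finally show ?thesis .
qed

definition block_swap :: "nat \<Rightarrow> nat \<Rightarrow> nat \<Rightarrow> nat \<Rightarrow> nat"
  where "block_swap lo mid hi x =
    (if lo \<le> x \<and> x < mid then x + (hi - mid) else if mid \<le> x \<and> x < hi then x - (mid - lo) else x)"

lemma bij_betw_block_swap:
  assumes "lo \<le> mid" "mid \<le> hi" "hi \<le> n"
  shows "bij_betw (block_swap lo mid hi) {..<n} {..<n}"
proof -
  have "inj_on (block_swap lo mid hi) {..<n}"
    unfolding inj_on_def block_swap_def using assms by auto
  moreover have "block_swap lo mid hi ` {..<n} \<subseteq> {..<n}"
    unfolding block_swap_def using assms by auto
  ultimately show ?thesis
    by (simp add: bij_betw_def endo_inj_surj)
qed

lemma block_swap_less_iff:
  assumes "lo \<le> mid" "mid \<le> hi" "x \<notin> {mid..<hi}" "y \<notin> {mid..<hi}"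
  shows "block_swap lo mid hi x < block_swap lo mid hi y \<longleftrightarrow> x < y"
  using assms unfolding block_swap_def by auto

definition queries_touching :: "(nat \<Rightarrow> act) \<Rightarrow> nat set \<Rightarrow> nat set"
  where "queries_touching alg B = {s. \<exists>i j f. alg s = Cmp i j f \<and> (i \<in> B \<or> j \<in> B)}"

lemma distinguishes_block_swap_imp_queries_touching:
  assumes "lo \<le> mid" "mid \<le> hi" and "distinguishes n id (block_swap lo mid hi) alg s"
  shows "s \<in> queries_touching alg {mid..<hi}"
proof (cases "alg s")
  case (Cmp i j f)
  then show ?thesis
    using assms block_swap_less_iff[OF assms(1,2), of i j] block_swap_less_iff[OF assms(1,2), of j i]
    by (auto simp: queries_touching_def distinguishes_def true_answer_def)
qed (use assms in \<open>simp add: distinguishes_def\<close>)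

lemma sum_indicator_queries_touching_le:
  assumes "disjoint_family_on B I" "finite I"
  shows "(\<Sum>b\<in>I. indicator (queries_touching alg (B b)) s) \<le> (2 :: real) * indicator {s. is_Cmp (alg s)} s"
proof (cases "alg s")
  case (Cmp i j f)
  have "(\<Sum>b\<in>I. indicator (queries_touching alg (B b)) s)
      \<le> (\<Sum>b\<in>I. indicator (B b) i + indicator (B b) j :: real)"
    by (intro sum_mono) (auto simp: Cmp queries_touching_def split: split_indicator)
  also have "\<dots> = indicator (\<Union>(B ` I)) i + indicator (\<Union>(B ` I)) j"
    using assms by (simp add: sum.distrib indicator_UN_disjoint)
  also have "\<dots> \<le> 2"
    by (simp add: indicator_def)
  finally show ?thesis by (simp add: Cmp)
qed (simp add: queries_touching_def)

lemma sum_prob_queries_touching_le: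
  assumes "disjoint_family_on B I" "finite I"
  shows "(\<Sum>b\<in>I. measure_pmf.prob M (queries_touching alg (B b))) \<le> 2 * measure_pmf.prob M {s. is_Cmp (alg s)}"
proof -
  have "(\<Sum>b\<in>I. measure_pmf.prob M (queries_touching alg (B b)))
      = measure_pmf.expectation M (\<lambda>s. \<Sum>b\<in>I. indicator (queries_touching alg (B b)) s)"
    by (subst Bochner_Integration.integral_sum)
       (auto intro!: measure_pmf.integrable_const_bound[where B = 1])
  also have "\<dots> \<le> measure_pmf.expectation M (\<lambda>s. 2 * indicator {s. is_Cmp (alg s)} s)"
    using assms
    by (intro integral_mono sum_indicator_queries_touching_le Bochner_Integration.integrable_sum)
       (auto intro!: measure_pmf.integrable_const_bound[where B = 1])
  also have "\<dots> = 2 * measure_pmf.prob M {s. is_Cmp (alg s)}"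
    by simp
  finally show ?thesis .
qed

lemma exists_le_average:
  fixes f :: "'a \<Rightarrow> real"
  assumes "finite I" "I \<noteq> {}"
  shows "\<exists>i\<in>I. real (card I) * f i \<le> sum f I"
proof (rule ccontr)
  assume "\<not> ?thesis"
  then have "(\<Sum>i\<in>I. sum f I) < (\<Sum>i\<in>I. real (card I) * f i)"
    using assms by (intro sum_strict_mono) auto
  then show False by (simp add: sum_distrib_left)
qed

lemma exists_ge_average:
  fixes f :: "'a \<Rightarrow> real"
  assumes "finite I" "I \<noteq> {}"
  shows "\<exists>i\<in>I. sum f I \<le> real (card I) * f i"
  using exists_le_average[OF assms, of "\<lambda>i. - f i"] by (auto simp: sum_negf)

lemma mem_block_imp_div: "x \<in> {k * Suc b..<k * Suc (Suc b)} \<Longrightarrow> x div k = Suc b"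
  by (auto intro: div_nat_eqI)

lemma disjoint_family_on_blocks: "disjoint_family_on (\<lambda>b. {k * Suc b..<k * Suc (Suc b)}) I"
proof (unfold disjoint_family_on_def, intro ballI impI)
  fix b b' :: nat
  assume "b \<noteq> b'"
  show "{k * Suc b..<k * Suc (Suc b)} \<inter> {k * Suc b'..<k * Suc (Suc b')} = {}"
  proof (intro equals0I)
    fix x assume "x \<in> {k * Suc b..<k * Suc (Suc b)} \<inter> {k * Suc b'..<k * Suc (Suc b')}"
    then have "Suc b = Suc b'" using mem_block_imp_div by (metis IntD1 IntD2)
    with \<open>b \<noteq> b'\<close> show False by simp
  qed
qed

lemma block_count_bounds:
  fixes k n :: nat
  assumes "0 < k" "4 * k \<le> n"
  shows "1 \<le> (n - k) div k" "k * Suc ((n - k) div k) \<le> n" "real n \<le> 2 * real ((n - k) div k) * real k"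
proof -
  let ?J = "(n - k) div k"
  have "k div k \<le> ?J" using assms by (intro div_le_mono) linarith
  then show "1 \<le> ?J" using assms by simp
  have "?J * k \<le> n - k" by (rule div_times_less_eq_dividend)
  then have "?J * k + k \<le> n" using assms by linarith
  then show "k * Suc ?J \<le> n" by (simp add: mult.commute)
  have "n - k = ?J * k + (n - k) mod k" by simp
  moreover have "(n - k) mod k < k" using assms by simp
  ultimately have "n < ?J * k + 2 * k" using assms by linarith
  then have "real n < real (?J * k + 2 * k)" by (simp only: of_nat_less_iff)
  then show "real n \<le> 2 * real ?J * real k" using assms by simp
qed

lemma summable_prob_queries_touching:
  assumes "summable (\<lambda>t. measure_pmf.prob (M t) {s. is_Cmp (alg s)})"
  shows "summable (\<lambda>t. measure_pmf.prob (M t) (queries_touching alg B))"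
  by (rule summable_comparison_test'[OF assms])
     (auto simp: queries_touching_def intro!: measure_pmf.finite_measure_mono)

lemma least_queried_block:
  fixes M :: "nat \<Rightarrow> nat pmf"
  assumes k: "0 < k" "4 * k \<le> n"
    and summable: "summable (\<lambda>t. measure_pmf.prob (M t) {s. is_Cmp (alg s)})"
  obtains b where "k * Suc (Suc b) \<le> n"
    and "real n * (\<Sum>t. measure_pmf.prob (M t) (queries_touching alg {k * Suc b..<k * Suc (Suc b)}))
           \<le> 4 * real k * (\<Sum>t. measure_pmf.prob (M t) {s. is_Cmp (alg s)})"
proof -
  define T where "T = (\<Sum>t. measure_pmf.prob (M t) {s. is_Cmp (alg s)})"
  define J where "J = (n - k) div k"
  define B where "B b = {k * Suc b..<k * Suc (Suc b)}" for b
  define e where "e b = (\<Sum>t. measure_pmf.prob (M t) (queries_touching alg (B b)))" for b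
  note summable_e = summable_prob_queries_touching[OF summable]
  have "(\<Sum>b<J. e b) = (\<Sum>t. \<Sum>b<J. measure_pmf.prob (M t) (queries_touching alg (B b)))"
    unfolding e_def by (rule suminf_sum[symmetric]) (rule summable_e)
  also have "\<dots> \<le> (\<Sum>t. 2 * measure_pmf.prob (M t) {s. is_Cmp (alg s)})"
    unfolding B_def
    by (intro suminf_le sum_prob_queries_touching_le disjoint_family_on_blocks summable_sum summable_mult)
       (use summable_e summable in auto)
  also have "\<dots> = 2 * T"
    unfolding T_def by (rule suminf_mult[OF summable])
  finally have sum_e: "(\<Sum>b<J. e b) \<le> 2 * T" .
  have "{..<J} \<noteq> {}" using block_count_bounds(1)[OF k] by (simp add: J_def lessThan_empty_iff)
  then obtain b where "b < J" "real J * e b \<le> (\<Sum>b<J. e b)"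
    using exists_le_average[of "{..<J}" e] by auto
  with sum_e have b: "b < J" "real J * e b \<le> 2 * T" by auto
  have "0 \<le> e b"
    unfolding e_def by (intro suminf_nonneg summable_e) simp
  with block_count_bounds(3)[OF k] have "real n * e b \<le> 2 * real J * real k * e b"
    unfolding J_def by (rule mult_right_mono)
  also have "\<dots> \<le> 4 * real k * T"
    using b(2) k by (simp add: algebra_simps)
  finally have "real n * e b \<le> 4 * real k * T" .
  moreover have "k * Suc (Suc b) \<le> k * Suc J"
    using b(1) by (intro mult_le_mono2) simp
  with block_count_bounds(2)[OF k] have "k * Suc (Suc b) \<le> n"
    unfolding J_def by linarith
  ultimately show thesis
    unfolding T_def e_def B_def using that by blast
qed

lemma identity_input_bound_small_k:
  assumes p: "0 < p" "p < 1/2" and k: "0 < k" "4 * k \<le> n"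
    and solves: "solves_ft_min_whp p n k s0 alg"
    and summable: "summable (\<lambda>t. measure_pmf.prob (state_dist p n id s0 alg t) {s. is_Cmp (alg s)})"
  shows "ln (real n / 4)
    \<le> (16 * real k * (\<Sum>t. measure_pmf.prob (state_dist p n id s0 alg t) {s. is_Cmp (alg s)}) / real n + 1)
        * ln ((1 - p) / p)"
proof -
  define P where "P t A = measure_pmf.prob (state_dist p n id s0 alg t) A" for t A
  define T where "T = (\<Sum>t. P t {s. is_Cmp (alg s)})"
  obtain b where "k * Suc (Suc b) \<le> n"
    and "real n * (\<Sum>t. P t (queries_touching alg {k * Suc b..<k * Suc (Suc b)})) \<le> 4 * real k * T"
    using least_queried_block[OF k summable] unfolding P_def T_def by blast
  (* Under the input block_swap 0 mid hi the k smallest elements are exactly block b. *)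
  define mid where "mid = k * Suc b"
  define hi where "hi = k * Suc (Suc b)"
  define e where "e = (\<Sum>t. P t (queries_touching alg {mid..<hi}))"
  have "hi \<le> n" "mid \<le> hi" "k \<le> mid" using \<open>k * Suc (Suc b) \<le> n\<close> by (auto simp: hi_def mid_def)
  have e_small: "4 * e \<le> 16 * real k * T / real n"
    using \<open>real n * _ \<le> 4 * real k * T\<close> k by (simp add: e_def mid_def hi_def field_simps)
  have fails: "successful_outputs n k id alg \<inter> successful_outputs n k (block_swap 0 mid hi) alg = {}"
    using \<open>k \<le> mid\<close> by (auto simp: successful_outputs_def block_swap_def hi_def mid_def)
  have "1/2 < 1 - 1 / real n" using k by (simp add: field_simps)
  then obtain t where t: "1/2 \<le> P t (successful_outputs n k id alg)"
    unfolding P_def using solves_ft_min_whp_imp_success_at_some_time[OF solves bij_betw_id] by blast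
  have "(\<Sum>t'<t. P t' {s. distinguishes n id (block_swap 0 mid hi) alg s})
      \<le> (\<Sum>t'<t. P t' (queries_touching alg {mid..<hi}))"
    using distinguishes_block_swap_imp_queries_touching[OF _ \<open>mid \<le> hi\<close>]
    by (intro sum_mono) (auto simp: P_def intro!: measure_pmf.finite_measure_mono)
  also have "\<dots> \<le> e"
    unfolding e_def P_def using summable_prob_queries_touching[OF summable]
    by (intro sum_le_suminf) auto
  finally have "ln (real n * (1/2) / 2) \<le> (2 * e / (1/2) + 1) * ln ((1 - p) / p)"
    using t
    by (intro whp_forces_distinguishing_queries[OF p _ solves bij_betw_block_swap[OF _ \<open>mid \<le> hi\<close> \<open>hi \<le> n\<close>] _ fails])
       (use k in \<open>auto simp: P_def successful_outputs_def\<close>)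
  also have "\<dots> \<le> (16 * real k * T / real n + 1) * ln ((1 - p) / p)"
    using e_small p by (intro mult_right_mono) (auto simp: field_simps)
  finally show ?thesis by (simp add: T_def P_def)
qed

definition outputs_in :: "(nat \<Rightarrow> act) \<Rightarrow> nat set \<Rightarrow> nat set"
  where "outputs_in alg X = {s. \<exists>x. alg s = Out x \<and> x \<in> X}"

lemma most_output_block:
  fixes M :: "nat pmf" and h k :: nat
  assumes "0 < h"
  obtains i where "i * h + h \<le> k + h"
    and "real h * measure_pmf.prob M (outputs_in alg {..<k})
           \<le> real (k + h) * measure_pmf.prob M (outputs_in alg {i * h..<i * h + h})"
proof -
  define Q where "Q = Suc (k div h)"
  define P where "P i = measure_pmf.prob M (outputs_in alg {i * h..<i * h + h})" for i
  have "outputs_in alg {..<k} \<subseteq> (\<Union>i<Q. outputs_in alg {i * h..<i * h + h})"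
  proof
    fix s assume "s \<in> outputs_in alg {..<k}"
    then obtain x where x: "alg s = Out x" "x < k" by (auto simp: outputs_in_def)
    have "x < x div h * h + h"
      using \<open>0 < h\<close> by (metis add.commute div_mult_mod_eq add_less_cancel_left mod_less_divisor)
    moreover have "x div h < Q" unfolding Q_def using x(2) by (simp add: div_le_mono less_Suc_eq_le)
    ultimately show "s \<in> (\<Union>i<Q. outputs_in alg {i * h..<i * h + h})"
      using x by (auto simp: outputs_in_def intro!: bexI[of _ "x div h"])
  qed
  then have "measure_pmf.prob M (outputs_in alg {..<k}) \<le> measure_pmf.prob M (\<Union>i<Q. outputs_in alg {i * h..<i * h + h})"
    by (rule measure_pmf.finite_measure_mono) simp
  also have "\<dots> \<le> (\<Sum>i<Q. P i)"
    unfolding P_def by (rule measure_pmf.finite_measure_subadditive_finite) auto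
  finally have sum_P: "measure_pmf.prob M (outputs_in alg {..<k}) \<le> (\<Sum>i<Q. P i)" .
  have "{..<Q} \<noteq> {}" by (simp add: Q_def lessThan_empty_iff)
  then obtain i where "i < Q" "(\<Sum>i<Q. P i) \<le> real Q * P i"
    using exists_ge_average[of "{..<Q}" P] by auto
  have "Q * h = k div h * h + h" by (simp add: Q_def)
  then have "Q * h \<le> k + h" using div_times_less_eq_dividend[of k h] by linarith
  have "real h * measure_pmf.prob M (outputs_in alg {..<k}) \<le> real h * (real Q * P i)"
    using sum_P \<open>(\<Sum>i<Q. P i) \<le> real Q * P i\<close> by (intro mult_left_mono) auto
  also have "\<dots> = real (Q * h) * P i"
    by simp
  also have "\<dots> \<le> real (k + h) * P i"
    using \<open>Q * h \<le> k + h\<close> by (intro mult_right_mono of_nat_mono) (auto simp: P_def)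
  finally have "real h * measure_pmf.prob M (outputs_in alg {..<k}) \<le> real (k + h) * P i" .
  moreover have "i * h \<le> k div h * h"
    using \<open>i < Q\<close> by (simp add: Q_def)
  then have "i * h + h \<le> k + h"
    using div_times_less_eq_dividend[of k h] by linarith
  ultimately show thesis
    using that by (simp add: P_def)
qed

lemma identity_input_bound_large_k:
  assumes p: "0 < p" "p < 1/2" and k: "k < n" "2 < n"
    and solves: "solves_ft_min_whp p n k s0 alg"
    and summable: "summable (\<lambda>t. measure_pmf.prob (state_dist p n id s0 alg t) {s. is_Cmp (alg s)})"
  shows "ln (real (n - k) / 4)
    \<le> (4 * real n * (\<Sum>t. measure_pmf.prob (state_dist p n id s0 alg t) {s. is_Cmp (alg s)}) / real (n - k) + 1)
        * ln ((1 - p) / p)"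
proof -
  define P where "P t A = measure_pmf.prob (state_dist p n id s0 alg t) A" for t A
  define T where "T = (\<Sum>t. P t {s. is_Cmp (alg s)})"
  define h where "h = n - k"
  have h: "0 < h" "k + h = n" using k by (auto simp: h_def)
  have "1/2 < 1 - 1 / real n" using k by (simp add: field_simps)
  then obtain t where "1/2 \<le> P t (successful_outputs n k id alg)"
    unfolding P_def using solves_ft_min_whp_imp_success_at_some_time[OF solves bij_betw_id] by blast
  also have "\<dots> \<le> P t (outputs_in alg {..<k})"
    unfolding P_def
    by (rule measure_pmf.finite_measure_mono) (auto simp: successful_outputs_def outputs_in_def)
  finally have half: "1/2 \<le> P t (outputs_in alg {..<k})" .
  obtain i where "i * h + h \<le> n"
    and "real h * P t (outputs_in alg {..<k}) \<le> real n * P t (outputs_in alg {i * h..<i * h + h})"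
    using most_output_block[OF \<open>0 < h\<close>] h(2) unfolding P_def by metis
  (* Under the input block_swap lo mid n block i holds the h = n - k largest elements. *)
  define lo where "lo = i * h"
  define mid where "mid = i * h + h"
  have q: "real h / (2 * real n) \<le> P t (outputs_in alg {lo..<mid})"
    using half \<open>real h * _ \<le> _\<close> mult_left_mono[OF half, of "real h"] k
    by (simp add: lo_def mid_def field_simps)
  have "mid \<le> n" using \<open>i * h + h \<le> n\<close> by (simp add: mid_def)
  have fails: "outputs_in alg {lo..<mid} \<inter> successful_outputs n k (block_swap lo mid n) alg = {}"
    using h by (auto simp: outputs_in_def successful_outputs_def block_swap_def lo_def mid_def)
  have "(\<Sum>t'<t. P t' {s. distinguishes n id (block_swap lo mid n) alg s}) \<le> (\<Sum>t'<t. P t' {s. is_Cmp (alg s)})"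
    using distinguishes_imp_is_Cmp
    by (intro sum_mono) (auto simp: P_def intro!: measure_pmf.finite_measure_mono)
  also have "\<dots> \<le> T"
    unfolding T_def using summable by (intro sum_le_suminf) (auto simp: P_def)
  finally have "ln (real n * (real h / (2 * real n)) / 2) \<le> (2 * T / (real h / (2 * real n)) + 1) * ln ((1 - p) / p)"
    using q h k
    by (intro whp_forces_distinguishing_queries[OF p _ solves bij_betw_block_swap[OF _ \<open>mid \<le> n\<close> order_refl] _ fails])
       (auto simp: P_def outputs_in_def lo_def mid_def)
  moreover have "real n * (real h / (2 * real n)) / 2 = real h / 4"
    and "2 * T / (real h / (2 * real n)) = 4 * real n * T / real h"
    using h k by (auto simp: field_simps)
  ultimately have "ln (real h / 4) \<le> (4 * real n * T / real h + 1) * ln ((1 - p) / p)"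
    by (simp only:)
  then show ?thesis unfolding T_def P_def h_def .
qed

lemma identity_input_ln_bound:
  assumes p: "0 < p" "p < 1/2" and c: "0 < c" "c < 1" and n: "2 < n"
    and k: "0 < k" "real k \<le> c * real n"
    and solves: "solves_ft_min_whp p n k s0 alg"
    and summable: "summable (\<lambda>t. measure_pmf.prob (state_dist p n id s0 alg t) {s. is_Cmp (alg s)})"
  shows "ln ((1 - c) * real n / 4)
    \<le> (16 * real k * (\<Sum>t. measure_pmf.prob (state_dist p n id s0 alg t) {s. is_Cmp (alg s)})
          / ((1 - c) * real n) + 1) * ln ((1 - p) / p)"
proof -
  define T where "T = (\<Sum>t. measure_pmf.prob (state_dist p n id s0 alg t) {s. is_Cmp (alg s)})"
  define L where "L = ln ((1 - p) / p)"
  have "0 \<le> T" unfolding T_def by (intro suminf_nonneg summable) simp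
  have "0 < L" using p by (simp add: L_def field_simps)
  have "0 < (1 - c) * real n" using c n by simp
  have "c * real n < real n" using c n by simp
  then have "k < n" using k by linarith
  have "?thesis \<longleftrightarrow> ln ((1 - c) * real n / 4) \<le> (16 * real k * T / ((1 - c) * real n) + 1) * L"
    by (simp add: T_def L_def)
  also have \<dots>
  proof (cases "4 * k \<le> n")
    case True
    have "ln ((1 - c) * real n / 4) \<le> ln (real n / 4)"
      using c n by (subst ln_le_cancel_iff) (auto simp: field_simps)
    also have "\<dots> \<le> (16 * real k * T / real n + 1) * L"
      unfolding T_def L_def using identity_input_bound_small_k[OF p k(1) True solves summable] .
    also have "\<dots> \<le> (16 * real k * T / ((1 - c) * real n) + 1) * L"
      using c n \<open>0 \<le> T\<close> \<open>0 < L\<close> \<open>0 < (1 - c) * real n\<close> mult_nonneg_nonneg[of c "real n"]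
      by (intro mult_right_mono add_right_mono divide_left_mono) (auto simp: algebra_simps)
    finally show ?thesis .
  next
    case False
    have "(1 - c) * real n \<le> real (n - k)"
      using k \<open>k < n\<close> by (simp add: of_nat_diff algebra_simps)
    then have "ln ((1 - c) * real n / 4) \<le> ln (real (n - k) / 4)"
      using \<open>0 < (1 - c) * real n\<close> by (subst ln_le_cancel_iff) auto
    also have "\<dots> \<le> (4 * real n * T / real (n - k) + 1) * L"
      unfolding T_def L_def using identity_input_bound_large_k[OF p \<open>k < n\<close> n solves summable] .
    also have "\<dots> \<le> (16 * real k * T / ((1 - c) * real n) + 1) * L"
    proof (intro mult_right_mono add_right_mono)
      have "4 * real n * T / real (n - k) \<le> 4 * real n * T / ((1 - c) * real n)"
        using \<open>(1 - c) * real n \<le> real (n - k)\<close> \<open>0 \<le> T\<close> \<open>0 < (1 - c) * real n\<close>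
        by (intro divide_left_mono) auto
      also have "\<dots> = 4 * (real n * T) / ((1 - c) * real n)"
        by simp
      also have "\<dots> \<le> 4 * (4 * real k * T) / ((1 - c) * real n)"
        using False \<open>0 \<le> T\<close> \<open>0 < (1 - c) * real n\<close>
        by (intro divide_right_mono mult_left_mono mult_right_mono) auto
      finally show "4 * real n * T / real (n - k) \<le> 16 * real k * T / ((1 - c) * real n)"
        by simp
    qed (use \<open>0 < L\<close> in simp)
    finally show ?thesis .
  qed
  finally show ?thesis .
qed

lemma expected_comparisons_eq_ennreal:
  assumes "summable (\<lambda>t. measure_pmf.prob (state_dist p n rk s0 alg t) {s. is_Cmp (alg s)})"
  shows "expected_comparisons p n rk s0 alg
           = ennreal (\<Sum>t. measure_pmf.prob (state_dist p n rk s0 alg t) {s. is_Cmp (alg s)})"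
  unfolding expected_comparisons_def by (rule suminf_ennreal2[OF _ assms]) simp

lemma expected_comparisons_eq_top:
  assumes "\<not> summable (\<lambda>t. measure_pmf.prob (state_dist p n rk s0 alg t) {s. is_Cmp (alg s)})"
  shows "expected_comparisons p n rk s0 alg = \<top>"
proof (rule ccontr)
  assume "expected_comparisons p n rk s0 alg \<noteq> \<top>"
  then have "summable (\<lambda>t. measure_pmf.prob (state_dist p n rk s0 alg t) {s. is_Cmp (alg s)})"
    unfolding expected_comparisons_def by (rule summable_suminf_not_top[rotated]) simp
  with assms show False ..
qed

lemma identity_input_expected_comparisons:
  assumes p: "0 < p" "p < 1/2" and c: "0 < c" "c < 1" and n: "2 < n"
    and ln_n: "2 * (ln ((1 - p) / p) + ln (4 / (1 - c))) \<le> ln (real n)"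
    and k: "0 < k" "real k \<le> c * real n"
    and solves: "solves_ft_min_whp p n k s0 alg"
  shows "ennreal ((1 - c) / (32 * ln ((1 - p) / p)) * (real n / real k) * ln (real n))
           \<le> expected_comparisons p n id s0 alg"
proof (cases "summable (\<lambda>t. measure_pmf.prob (state_dist p n id s0 alg t) {s. is_Cmp (alg s)})")
  case summable: True
  define T where "T = (\<Sum>t. measure_pmf.prob (state_dist p n id s0 alg t) {s. is_Cmp (alg s)})"
  define L where "L = ln ((1 - p) / p)"
  define X where "X = 16 * real k * T / ((1 - c) * real n)"
  have "0 < L" using p by (simp add: L_def field_simps)
  have "ln ((1 - c) * real n / 4) = ln (real n) - ln (4 / (1 - c))"
    using c n by (simp add: ln_div ln_mult)
  moreover have "ln ((1 - c) * real n / 4) \<le> X * L + L"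
    using identity_input_ln_bound[OF p c n k solves summable]
    unfolding X_def T_def L_def by (simp add: distrib_right)
  ultimately have "ln (real n) \<le> 2 * (X * L)"
    using ln_n unfolding L_def by argo
  then have "(1 - c) * real n * ln (real n) \<le> (1 - c) * real n * (2 * (X * L))"
    using c by (intro mult_left_mono) auto
  also have "\<dots> = 32 * L * real k * T"
    using c n unfolding X_def by (simp add: field_simps)
  finally have "(1 - c) * real n * ln (real n) \<le> T * (32 * L * real k)"
    by (simp only: mult.commute)
  then have "(1 - c) * real n * ln (real n) / (32 * L * real k) \<le> T"
    using k \<open>0 < L\<close> by (subst pos_divide_le_eq) auto
  then have "(1 - c) / (32 * L) * (real n / real k) * ln (real n) \<le> T"
    by simp
  then show ?thesis
    unfolding expected_comparisons_eq_ennreal[OF summable] T_def L_def by (rule ennreal_leI)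
qed (simp add: expected_comparisons_eq_top)

theorem corollary4:
  fixes p c :: real
  assumes "0 < p" and "p < 1/2" and "0 < c" and "c < 1"
  shows "\<exists>C > 0. \<exists>N. \<forall>n k s0 alg.
           n \<ge> N \<longrightarrow> 1 \<le> k \<longrightarrow> real k \<le> c * real n \<longrightarrow>
           solves_ft_min_whp p n k s0 alg \<longrightarrow>
           (\<exists>rk. bij_betw rk {..<n} {..<n} \<and>
              ennreal (C * (real n / real k) * ln (real n))
                \<le> expected_comparisons p n rk s0 alg)"
proof -
  define L where "L = ln ((1 - p) / p)"
  define N where "N = nat \<lceil>exp (2 * (L + ln (4 / (1 - c))))\<rceil> + 3"
  have "0 < L" using assms by (simp add: L_def field_simps)
  show ?thesis
  proof (intro exI[of _ "(1 - c) / (32 * L)"] conjI exI[of _ N] allI impI)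
    show "0 < (1 - c) / (32 * L)" using assms \<open>0 < L\<close> by simp
    fix n k s0 alg
    assume n: "N \<le> n" and k: "1 \<le> k" "real k \<le> c * real n"
      and solves: "solves_ft_min_whp p n k s0 alg"
    have "exp (2 * (L + ln (4 / (1 - c)))) \<le> real n"
      using n unfolding N_def by linarith
    then have "2 * (L + ln (4 / (1 - c))) \<le> ln (real n)"
      using n by (simp add: N_def ln_ge_iff)
    moreover have "2 < n" and "0 < k" using n k by (auto simp: N_def)
    ultimately have "ennreal ((1 - c) / (32 * L) * (real n / real k) * ln (real n))
        \<le> expected_comparisons p n id s0 alg"
      unfolding L_def by (intro identity_input_expected_comparisons[OF assms _ _ _ k(2) solves])
    then show "\<exists>rk. bij_betw rk {..<n} {..<n}
        \<and> ennreal ((1 - c) / (32 * L) * (real n / real k) * ln (real n)) \<le> expected_comparisons p n rk s0 alg"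
      using bij_betw_id by blast
  qed
qed

end
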